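(* Fix a real number $0<\varepsilon<1$. There is a constant $c_0=c_0(\varepsilon)$ such that for every real $c\ge c_0$ there is $n_0$ with the following property: no line in $\mathbb{R}^2$ intersects more than two of the squares $Q_n$, $n\ge n_0$, where $Q_n$ is the closed axis-parallel square with side length $\left\lfloor \frac{2^{n}}{cn^{1+\varepsilon}}\right\rfloor$ whose top left corner is $\left(2^{n},\left\lfloor \frac{2^{n}}{n^{\varepsilon}}\right\rfloor\right)$, i.e. $$Q_n=\left[2^n,\,2^n+\left\lfloor \tfrac{2^{n}}{cn^{1+\varepsilon}}\right\rfloor\right]\times\left[\left\lfloor \tfrac{2^{n}}{n^{\varepsilon}}\right\rfloor-\left\lfloor \tfrac{2^{n}}{cn^{1+\varepsilon}}\right\rfloor,\,\left\lfloor \tfrac{2^{n}}{n^{\varepsilon}}\right\rfloor\right].$$ *)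

theory Defs
  imports "HOL-Analysis.Analysis"
begin

definition side :: "real \<Rightarrow> real \<Rightarrow> nat \<Rightarrow> int" where
  "side \<epsilon> c n = \<lfloor>2 ^ n / (c * real n powr (1 + \<epsilon>))\<rfloor>"

definition top :: "real \<Rightarrow> nat \<Rightarrow> int" where
  "top \<epsilon> n = \<lfloor>2 ^ n / real n powr \<epsilon>\<rfloor>"

definition Qsq :: "real \<Rightarrow> real \<Rightarrow> nat \<Rightarrow> (real \<times> real) set" where
  "Qsq \<epsilon> c n = {2 ^ n .. 2 ^ n + real_of_int (side \<epsilon> c n)}
                  \<times> {real_of_int (top \<epsilon> n - side \<epsilon> c n) .. real_of_int (top \<epsilon> n)}"

definition is_line :: "(real \<times> real) set \<Rightarrow> bool" where
  "is_line L \<longleftrightarrow> (\<exists>a b d. (a, b) \<noteq> (0, 0) \<and> L = {(x, y). a * x + b * y = d})"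

end

theory Submission
  imports Defs "HOL-Real_Asymp.Real_Asymp"
begin

(* If the line A x + B y = d meets Q_n, dividing its equation by 2^n shows that
   A + B n^-eps - d 2^-n = O((|A| + |B|) n^(-1-eps) / c): the point (2^-n, n^-eps) lies close to
   the line A + B g = d s of the (s, g)-plane. Any two squares are much farther apart horizontally
   than vertically, so |A| <= 8 |B| and the error is O(|B| n^(-1-eps) / c). For a < b < c the
   combination (2^-a - 2^-b)(b^-eps - c^-eps) - (2^-b - 2^-c)(a^-eps - b^-eps) vanishes on affine
   functions of s and is therefore bounded by these errors, while the mean value theorem shows it
   to be at least eps c / 648 times that bound; this is impossible for c > 648 / eps. *)

lemma powr_neg_diff_bounds:
  fixes \<epsilon> x y :: real
  assumes "0 < \<epsilon>" "0 < x" "x < y"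
  shows "\<epsilon> * (y - x) * y powr (-1-\<epsilon>) \<le> x powr (-\<epsilon>) - y powr (-\<epsilon>)"
    and "x powr (-\<epsilon>) - y powr (-\<epsilon>) \<le> \<epsilon> * (y - x) * x powr (-1-\<epsilon>)"
proof -
  have "\<And>t. x \<le> t \<Longrightarrow> t \<le> y \<Longrightarrow>
      ((\<lambda>t. t powr (-\<epsilon>)) has_real_derivative (-\<epsilon>) * t powr (-\<epsilon>-1)) (at t)"
    using assms by (intro has_real_derivative_powr) auto
  from MVT2[OF \<open>x < y\<close> this] obtain z where z: "x < z" "z < y"
    and mvt: "y powr (-\<epsilon>) - x powr (-\<epsilon>) = (y - x) * ((-\<epsilon>) * z powr (-\<epsilon>-1))"
    by blast
  have eq: "x powr (-\<epsilon>) - y powr (-\<epsilon>) = \<epsilon> * (y - x) * z powr (-1-\<epsilon>)"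
    using mvt unfolding minus_diff_commute[of \<epsilon> 1] by (simp add: algebra_simps)
  have "y powr (-1-\<epsilon>) \<le> z powr (-1-\<epsilon>)" "z powr (-1-\<epsilon>) \<le> x powr (-1-\<epsilon>)"
    using assms z by (auto intro: powr_mono2')
  moreover have "0 \<le> \<epsilon> * (y - x)"
    using assms by simp
  ultimately show "\<epsilon> * (y - x) * y powr (-1-\<epsilon>) \<le> x powr (-\<epsilon>) - y powr (-\<epsilon>)"
    and "x powr (-\<epsilon>) - y powr (-\<epsilon>) \<le> \<epsilon> * (y - x) * x powr (-1-\<epsilon>)"
    unfolding eq by (simp_all add: mult_left_mono)
qed

lemma powr_neg_le_sq_ratio:
  fixes \<epsilon> x y :: real
  assumes "0 \<le> \<epsilon>" "\<epsilon> \<le> 1" "0 < x" "x \<le> y"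
  shows "x powr (-1-\<epsilon>) \<le> (y / x)\<^sup>2 * y powr (-1-\<epsilon>)"
proof -
  have "x powr (-1-\<epsilon>) = (y / x) powr (1 + \<epsilon>) * y powr (-1-\<epsilon>)"
  proof -
    have "(y / x) powr (1 + \<epsilon>) * y powr (-1-\<epsilon>) = (y powr (1 + \<epsilon>) / x powr (1 + \<epsilon>)) / y powr (1 + \<epsilon>)"
      using assms by (simp add: powr_divide powr_minus_divide[of _ "1 + \<epsilon>", simplified])
    also have "\<dots> = x powr (-1-\<epsilon>)"
      using assms by (simp add: powr_minus_divide[of _ "1 + \<epsilon>", simplified])
    finally show ?thesis ..
  qed
  also have "(y / x) powr (1 + \<epsilon>) \<le> (y / x) powr 2"
    using assms by (intro powr_mono) auto
  finally show ?thesis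
    using assms by (simp add: mult_right_mono)
qed

lemma cubic_le_pow2: "1 \<le> p \<Longrightarrow> p * (p + 18)\<^sup>2 + 384 \<le> 384 * 2 ^ p"
proof (induction p rule: dec_induct)
  case (step n)
  have "Suc n * (Suc n + 18)\<^sup>2 \<le> 2 * n * (n + 18)\<^sup>2 + 384"
    using step.hyps by (simp add: power2_eq_square algebra_simps)
  then show ?case
    using step.IH by simp
qed simp

lemma square_le_pow2: "1 \<le> p \<Longrightarrow> (p + 18)\<^sup>2 \<le> 256 * 2 ^ p"
proof (induction p rule: dec_induct)
  case (step n)
  have "(Suc n + 18)\<^sup>2 \<le> 2 * (n + 18)\<^sup>2"
    by (simp add: power2_eq_square algebra_simps)
  then show ?case
    using step.IH by simp
qed simp

lemma powr_neg_le_shift: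
  fixes \<epsilon> :: real and a b :: nat
  assumes "0 \<le> \<epsilon>" "\<epsilon> \<le> 1" "16 \<le> a" "a \<le> b"
  shows "real a powr (-1-\<epsilon>) \<le> ((real (b - a) + 18) / 16)\<^sup>2 * real (b + 2) powr (-1-\<epsilon>)"
proof -
  have "16 * (real (b - a) + real a + 2) \<le> real a * (real (b - a) + 18)"
    using assms mult_right_mono[of 16 "real a" "real (b - a)"] by (simp add: algebra_simps)
  then have "real (b + 2) / real a \<le> (real (b - a) + 18) / 16"
    using assms by (simp add: field_simps)
  then have "(real (b + 2) / real a)\<^sup>2 \<le> ((real (b - a) + 18) / 16)\<^sup>2"
    using assms by (intro power_mono) auto
  moreover have "real a powr (-1-\<epsilon>) \<le> (real (b + 2) / real a)\<^sup>2 * real (b + 2) powr (-1-\<epsilon>)"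
    using assms by (intro powr_neg_le_sq_ratio) auto
  ultimately show ?thesis
    by (meson mult_right_mono order_trans powr_ge_zero)
qed

lemma powr_neg_le_pow2_shift:
  fixes \<epsilon> :: real and a b :: nat
  assumes "0 \<le> \<epsilon>" "\<epsilon> \<le> 1" "16 \<le> a" "a < b"
  shows "real a powr (-1-\<epsilon>) \<le> 2 ^ (b - a) * real (b + 2) powr (-1-\<epsilon>)"
proof -
  have "real ((b - a + 18)\<^sup>2) \<le> real (256 * 2 ^ (b - a))"
    using square_le_pow2[of "b - a"] assms by (intro of_nat_mono) simp
  then have "((real (b - a) + 18) / 16)\<^sup>2 \<le> 2 ^ (b - a)"
    using assms by (simp add: field_simps)
  then show ?thesis
    using powr_neg_le_shift[of \<epsilon> a b] assms
    by (meson less_imp_le mult_right_mono order_trans powr_ge_zero)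
qed

lemma powr_neg_le_double_shift:
  fixes \<epsilon> :: real and b :: nat
  assumes "0 \<le> \<epsilon>" "\<epsilon> \<le> 1" "16 \<le> b"
  shows "real b powr (-1-\<epsilon>) \<le> 2 * real (b + 2) powr (-1-\<epsilon>)"
proof -
  have "real b powr (-1-\<epsilon>) \<le> 81 / 64 * real (b + 2) powr (-1-\<epsilon>)"
    using powr_neg_le_shift[of \<epsilon> b b] assms by (simp add: power2_eq_square)
  then show ?thesis
    using powr_ge_zero[of "real (b + 2)" "-1-\<epsilon>"] by linarith
qed

lemma powr_neg_decrement_le:
  fixes \<epsilon> :: real and a b :: nat
  assumes "0 < \<epsilon>" "\<epsilon> \<le> 1" "16 \<le> a" "a < b"
  shows "real a powr (-\<epsilon>) - real b powr (-\<epsilon>)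
    \<le> 3/2 * \<epsilon> * (2 ^ (b - a) - 1) * real (b + 2) powr (-1-\<epsilon>)"
proof -
  define p where "p = b - a"
  have p: "1 \<le> p" "real b - real a = real p"
    using assms unfolding p_def by auto
  have bound: "real p * ((real p + 18) / 16)\<^sup>2 \<le> 3/2 * (2 ^ p - 1)"
  proof -
    have "real (p * (p + 18)\<^sup>2 + 384) \<le> real (384 * 2 ^ p)"
      using cubic_le_pow2[OF p(1)] by linarith
    then show ?thesis
      by (simp add: field_simps power2_eq_square)
  qed
  have "real a powr (-\<epsilon>) - real b powr (-\<epsilon>) \<le> \<epsilon> * real p * real a powr (-1-\<epsilon>)"
    using powr_neg_diff_bounds(2)[of \<epsilon> "real a" "real b"] assms p by simp
  also have "\<dots> \<le> \<epsilon> * real p * (((real p + 18) / 16)\<^sup>2 * real (b + 2) powr (-1-\<epsilon>))"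
    using powr_neg_le_shift[of \<epsilon> a b] assms unfolding p_def by (intro mult_left_mono) auto
  also have "\<dots> = \<epsilon> * (real p * ((real p + 18) / 16)\<^sup>2) * real (b + 2) powr (-1-\<epsilon>)"
    by (simp add: mult_ac)
  also have "\<dots> \<le> \<epsilon> * (3/2 * (2 ^ p - 1)) * real (b + 2) powr (-1-\<epsilon>)"
    using bound assms by (intro mult_right_mono mult_left_mono) auto
  finally show ?thesis
    unfolding p_def by (simp add: mult_ac)
qed

lemma powr_neg_decrement_ge:
  fixes \<epsilon> :: real and b c :: nat
  assumes "0 < \<epsilon>" "0 < b" "b < c"
  shows "2 * \<epsilon> * (1 - 1 / 2 ^ (c - b)) * real (b + 2) powr (-1-\<epsilon>)
    \<le> real b powr (-\<epsilon>) - real c powr (-\<epsilon>)"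
proof (cases "c = b + 1")
  case True
  have "\<epsilon> * real (b + 2) powr (-1-\<epsilon>) \<le> \<epsilon> * real (b + 1) powr (-1-\<epsilon>)"
    using assms by (intro mult_left_mono powr_mono2') auto
  also have "\<dots> \<le> real b powr (-\<epsilon>) - real c powr (-\<epsilon>)"
    using powr_neg_diff_bounds(1)[of \<epsilon> "real b" "real b + 1"] assms True by (simp add: add.commute)
  finally show ?thesis
    using True by simp
next
  case False
  have "(1 - 1 / 2 ^ (c - b)) * (2 * \<epsilon> * real (b + 2) powr (-1-\<epsilon>))
      \<le> 1 * (2 * \<epsilon> * real (b + 2) powr (-1-\<epsilon>))"
    using assms by (intro mult_right_mono) auto
  also have "\<dots> \<le> real b powr (-\<epsilon>) - real (b + 2) powr (-\<epsilon>)"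
    using powr_neg_diff_bounds(1)[of \<epsilon> "real b" "real b + 2"] assms by (simp add: add.commute)
  also have "\<dots> \<le> real b powr (-\<epsilon>) - real c powr (-\<epsilon>)"
    using assms False by (simp add: powr_mono2')
  finally show ?thesis
    by (simp add: algebra_simps)
qed

lemma convexity_gap_ge:
  fixes \<epsilon> :: real and a b c :: nat
  assumes "0 < \<epsilon>" "\<epsilon> \<le> 1" "16 \<le> a" "a < b" "b < c"
  shows "\<epsilon> / 2 * (2 ^ (b - a) - 1) * (1 / 2 ^ b - 1 / 2 ^ c) * real (b + 2) powr (-1-\<epsilon>)
    \<le> (1 / 2 ^ a - 1 / 2 ^ b) * (real b powr (-\<epsilon>) - real c powr (-\<epsilon>))
      - (1 / 2 ^ b - 1 / 2 ^ c) * (real a powr (-\<epsilon>) - real b powr (-\<epsilon>))"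
proof -
  define P :: real where "P = 2 ^ (b - a)"
  define k :: real where "k = 1 - 1 / 2 ^ (c - b)"
  define u :: real where "u = 1 / 2 ^ b"
  define W where "W = real (b + 2) powr (-1-\<epsilon>)"
  have P: "1 \<le> P" and k: "0 \<le> k" and u: "0 < u"
    unfolding P_def k_def u_def by simp_all
  have \<gamma>: "1 / 2 ^ a - 1 / 2 ^ b = (P - 1) * u"
    unfolding P_def u_def using assms by (simp add: field_simps flip: power_add)
  have \<beta>: "1 / 2 ^ b - 1 / 2 ^ c = k * u"
    unfolding k_def u_def using assms by (simp add: field_simps flip: power_add)
  have "(P - 1) * u * (2 * \<epsilon> * k * W)
      \<le> (1 / 2 ^ a - 1 / 2 ^ b) * (real b powr (-\<epsilon>) - real c powr (-\<epsilon>))"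
    unfolding \<gamma> k_def W_def using assms P u powr_neg_decrement_ge[of \<epsilon> b c]
    by (intro mult_left_mono) auto
  moreover have "(1 / 2 ^ b - 1 / 2 ^ c) * (real a powr (-\<epsilon>) - real b powr (-\<epsilon>))
      \<le> k * u * (3/2 * \<epsilon> * (P - 1) * W)"
    unfolding \<beta> P_def W_def using assms k u powr_neg_decrement_le[of \<epsilon> a b]
    by (intro mult_left_mono) auto
  moreover have "(P - 1) * u * (2 * \<epsilon> * k * W) - k * u * (3/2 * \<epsilon> * (P - 1) * W)
      = \<epsilon> / 2 * (P - 1) * (k * u) * W"
    by (simp add: field_simps)
  ultimately show ?thesis
    unfolding \<beta> P_def [symmetric] W_def [symmetric] by linarith
qed

lemma weighted_powr_sum_le:
  fixes \<epsilon> :: real and a b c :: nat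
  assumes "0 < \<epsilon>" "\<epsilon> \<le> 1" "16 \<le> a" "a < b" "b < c"
  shows "(1 / 2 ^ a - 1 / 2 ^ c) * real b powr (-1-\<epsilon>) + (1 / 2 ^ b - 1 / 2 ^ c) * real a powr (-1-\<epsilon>)
      + (1 / 2 ^ a - 1 / 2 ^ b) * real c powr (-1-\<epsilon>)
    \<le> 9 * 2 ^ (b - a) * (1 / 2 ^ b - 1 / 2 ^ c) * real (b + 2) powr (-1-\<epsilon>)"
proof -
  define P :: real where "P = 2 ^ (b - a)"
  define k :: real where "k = 1 - 1 / 2 ^ (c - b)"
  define u :: real where "u = 1 / 2 ^ b"
  define W where "W n = real n powr (-1-\<epsilon>)" for n
  have u: "0 < u" and W0: "0 \<le> W (b + 2)"
    unfolding u_def W_def by simp_all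
  have P: "2 \<le> P"
    unfolding P_def using assms power_increasing[of 1 "b - a" "2::real"] by simp
  have k: "1/2 \<le> k" "k \<le> 1"
    unfolding k_def using assms power_increasing[of 1 "c - b" "2::real"] by (simp_all add: field_simps)
  have Wa: "W a \<le> P * W (b + 2)" and Wb: "W b \<le> 2 * W (b + 2)"
    unfolding W_def P_def using powr_neg_le_pow2_shift[of \<epsilon> a b] powr_neg_le_double_shift[of \<epsilon> b] assms
    by auto
  have Wc: "W c \<le> W b"
    unfolding W_def using assms by (simp add: powr_mono2')
  have weights: "1 / 2 ^ a - 1 / 2 ^ c = (P - 1 + k) * u" "1 / 2 ^ b - 1 / 2 ^ c = k * u"
    "1 / 2 ^ a - 1 / 2 ^ b = (P - 1) * u"
    unfolding P_def k_def u_def using assms by (simp_all add: field_simps flip: power_add)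
  have "(P - 1 + k) * u * W b + k * u * W a + (P - 1) * u * W c
      \<le> (P - 1 + k) * u * (2 * W (b + 2)) + k * u * (P * W (b + 2)) + (P - 1) * u * (2 * W (b + 2))"
    using P k u Wa Wb Wc by (intro add_mono mult_left_mono) auto
  also have "\<dots> \<le> 9 * P * (k * u) * W (b + 2)"
  proof -
    have "4 * (P * u * W (b + 2)) \<le> 8 * k * (P * u * W (b + 2))"
      using P k u W0 by (intro mult_right_mono) auto
    moreover have "2 * k * (u * W (b + 2)) \<le> 4 * (u * W (b + 2))"
      using k u W0 by (intro mult_right_mono) auto
    ultimately show ?thesis
      by (simp add: algebra_simps)
  qed
  finally show ?thesis
    unfolding weights P_def [symmetric] W_def [symmetric] .
qed

lemma mem_Qsq_bounds:
  fixes \<epsilon> C x y :: real and n :: nat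
  assumes "0 < C" "(x, y) \<in> Qsq \<epsilon> C n"
  shows "2 ^ n \<le> x" "x \<le> 2 ^ n + 2 ^ n * real n powr (-1-\<epsilon>) / C"
    and "2 ^ n * real n powr (-\<epsilon>) - 1 - 2 ^ n * real n powr (-1-\<epsilon>) / C \<le> y"
    and "y \<le> 2 ^ n * real n powr (-\<epsilon>)"
proof -
  have side: "2 ^ n / (C * real n powr (1 + \<epsilon>)) = 2 ^ n * real n powr (-1-\<epsilon>) / C"
    using assms by (simp add: powr_minus_divide[of _ "1 + \<epsilon>", simplified])
  have top: "2 ^ n / real n powr \<epsilon> = 2 ^ n * real n powr (-\<epsilon>)"
    by (simp add: powr_minus_divide)
  have "0 \<le> real_of_int (side \<epsilon> C n)"
    unfolding side_def using assms by simp
  moreover have "real_of_int (side \<epsilon> C n) \<le> 2 ^ n * real n powr (-1-\<epsilon>) / C"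
    unfolding side_def side [symmetric] by simp
  moreover have "2 ^ n * real n powr (-\<epsilon>) - 1 < real_of_int (top \<epsilon> n)"
    "real_of_int (top \<epsilon> n) \<le> 2 ^ n * real n powr (-\<epsilon>)"
    unfolding top_def top [symmetric] by linarith+
  moreover have "2 ^ n \<le> x" "x \<le> 2 ^ n + real_of_int (side \<epsilon> C n)"
    "real_of_int (top \<epsilon> n) - real_of_int (side \<epsilon> C n) \<le> y" "y \<le> real_of_int (top \<epsilon> n)"
    using assms(2) unfolding Qsq_def by auto
  ultimately show "2 ^ n \<le> x" "x \<le> 2 ^ n + 2 ^ n * real n powr (-1-\<epsilon>) / C"
    and "2 ^ n * real n powr (-\<epsilon>) - 1 - 2 ^ n * real n powr (-1-\<epsilon>) / C \<le> y"
    and "y \<le> 2 ^ n * real n powr (-\<epsilon>)"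
    by linarith+
qed

lemma Qsq_line_residual:
  fixes \<epsilon> C x y A B d :: real and n :: nat
  assumes "0 < C" "(x, y) \<in> Qsq \<epsilon> C n" "A * x + B * y = d"
    and "1 / 2 ^ n \<le> real n powr (-1-\<epsilon>) / C" \<comment> \<open>absorbs the rounding of \<open>top\<close>\<close>
  shows "\<bar>A + B * real n powr (-\<epsilon>) - d / 2 ^ n\<bar> \<le> (\<bar>A\<bar> + \<bar>B\<bar>) * (2 * real n powr (-1-\<epsilon>) / C)"
proof -
  define \<delta> where "\<delta> = real n powr (-1-\<epsilon>) / C"
  have \<delta>: "1 \<le> 2 ^ n * \<delta>" "0 \<le> \<delta>"
    using assms unfolding \<delta>_def by (simp_all add: field_simps)
  have eq: "2 ^ n * (A + B * real n powr (-\<epsilon>) - d / 2 ^ n)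
      = A * (2 ^ n - x) + B * (2 ^ n * real n powr (-\<epsilon>) - y)"
    using assms(3) by (simp add: algebra_simps)
  have "2 ^ n * \<bar>A + B * real n powr (-\<epsilon>) - d / 2 ^ n\<bar>
      = \<bar>A * (2 ^ n - x) + B * (2 ^ n * real n powr (-\<epsilon>) - y)\<bar>"
    unfolding eq [symmetric] abs_mult by simp
  also have "\<dots> \<le> \<bar>A\<bar> * \<bar>2 ^ n - x\<bar> + \<bar>B\<bar> * \<bar>2 ^ n * real n powr (-\<epsilon>) - y\<bar>"
    unfolding abs_mult [symmetric] by (rule abs_triangle_ineq)
  also have "\<dots> \<le> \<bar>A\<bar> * (2 ^ n * \<delta>) + \<bar>B\<bar> * (2 * (2 ^ n * \<delta>))"
    using mem_Qsq_bounds[OF assms(1,2)] \<delta> unfolding \<delta>_def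
    by (intro add_mono mult_left_mono) auto
  also have "\<dots> \<le> 2 ^ n * ((\<bar>A\<bar> + \<bar>B\<bar>) * (2 * \<delta>))"
    using \<delta> by (simp add: algebra_simps)
  finally have "\<bar>A + B * real n powr (-\<epsilon>) - d / 2 ^ n\<bar> \<le> (\<bar>A\<bar> + \<bar>B\<bar>) * (2 * \<delta>)"
    by (rule mult_left_le_imp_le) simp
  then show ?thesis
    unfolding \<delta>_def by simp
qed

lemma line_through_two_Qsq_slope_bound:
  fixes \<epsilon> C A B d xa ya xb yb :: real and a b :: nat
  assumes "0 \<le> \<epsilon>" "2 \<le> C" "1 \<le> a" "a < b"
    and "(xa, ya) \<in> Qsq \<epsilon> C a" "A * xa + B * ya = d"
    and "(xb, yb) \<in> Qsq \<epsilon> C b" "A * xb + B * yb = d"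
  shows "\<bar>A\<bar> \<le> 8 * \<bar>B\<bar>"
proof -
  have powr_le_1: "real n powr (-1-\<epsilon>) \<le> 1" "real n powr (-\<epsilon>) \<le> 1" if "1 \<le> n" for n
    using that assms powr_mono2'[of "-1-\<epsilon>" 1 "real n"] powr_mono2'[of "-\<epsilon>" 1 "real n"] by simp_all
  have corner: "2 ^ n * real n powr (-1-\<epsilon>) / C \<le> 2 ^ n / 2"
    "0 \<le> 2 ^ n * real n powr (-\<epsilon>)" "2 ^ n * real n powr (-\<epsilon>) \<le> 2 ^ n"
    if "1 \<le> n" for n :: nat
    using powr_le_1[OF that] assms by (auto simp: field_simps intro: mult_left_le)
  have "(2::real) ^ a * 2 \<le> 2 ^ b" "(4::real) \<le> 2 ^ b"
    using assms power_increasing[of "a + 1" b "2::real"] power_increasing[of 2 b "2::real"] by simp_all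
  moreover have "0 < C" "1 \<le> b"
    using assms by simp_all
  note mem_Qsq_bounds[OF \<open>0 < C\<close> assms(5)] mem_Qsq_bounds[OF \<open>0 < C\<close> assms(7)]
    corner[OF \<open>1 \<le> a\<close>] corner[OF \<open>1 \<le> b\<close>]
  ultimately have xy: "2 ^ b / 4 \<le> xb - xa" "yb - ya \<le> 2 * 2 ^ b" "ya - yb \<le> 2 * 2 ^ b"
    by linarith+
  have "A * (xb - xa) = - (B * (yb - ya))"
    using assms(6,8) by (simp add: algebra_simps)
  then have "\<bar>A\<bar> * \<bar>xb - xa\<bar> = \<bar>B\<bar> * \<bar>yb - ya\<bar>"
    by (metis abs_minus_cancel abs_mult)
  moreover have "\<bar>A\<bar> * (2 ^ b / 4) \<le> \<bar>A\<bar> * \<bar>xb - xa\<bar>" "\<bar>B\<bar> * \<bar>yb - ya\<bar> \<le> \<bar>B\<bar> * (2 * 2 ^ b)"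
    using xy by (intro mult_left_mono; simp)+
  ultimately have "\<bar>A\<bar> * (2 ^ b / 4) \<le> \<bar>B\<bar> * (2 * 2 ^ b)"
    by linarith
  then show ?thesis
    by (simp add: field_simps)
qed

lemma divided_difference_le_if_near_line:
  fixes A B d :: real and s g \<rho> :: "nat \<Rightarrow> real" and a b c :: nat
  assumes "B \<noteq> 0" "s b \<le> s a" "s c \<le> s b"
    and near: "\<And>n. n \<in> {a, b, c} \<Longrightarrow> \<bar>A + B * g n - d * s n\<bar> \<le> \<bar>B\<bar> * \<rho> n"
  shows "(s a - s b) * (g b - g c) - (s b - s c) * (g a - g b)
    \<le> (s a - s c) * \<rho> b + (s b - s c) * \<rho> a + (s a - s b) * \<rho> c"
proof -
  define r where "r n = A + B * g n - d * s n" for n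
  define E where "E = (s a - s b) * (g b - g c) - (s b - s c) * (g a - g b)"
  have "\<bar>B\<bar> * E \<le> \<bar>B * E\<bar>"
    unfolding abs_mult by (rule mult_left_mono) simp_all
  \<comment> \<open>These weights annihilate every affine function of \<open>s\<close>, so \<open>A\<close> and \<open>d\<close> drop out.\<close>
  also have "B * E = (s a - s c) * r b - (s b - s c) * r a - (s a - s b) * r c"
    unfolding r_def E_def by (simp add: algebra_simps)
  also have "\<bar>\<dots>\<bar> \<le> \<bar>(s a - s c) * r b\<bar> + \<bar>(s b - s c) * r a\<bar> + \<bar>(s a - s b) * r c\<bar>"
    by linarith
  also have "\<dots> = (s a - s c) * \<bar>r b\<bar> + (s b - s c) * \<bar>r a\<bar> + (s a - s b) * \<bar>r c\<bar>"
    using assms(2,3) by (simp add: abs_mult)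
  also have "\<dots> \<le> (s a - s c) * (\<bar>B\<bar> * \<rho> b) + (s b - s c) * (\<bar>B\<bar> * \<rho> a) + (s a - s b) * (\<bar>B\<bar> * \<rho> c)"
    using near[of a] near[of b] near[of c] assms(2,3) unfolding r_def
    by (intro add_mono mult_left_mono) simp_all
  also have "\<dots> = \<bar>B\<bar> * ((s a - s c) * \<rho> b + (s b - s c) * \<rho> a + (s a - s b) * \<rho> c)"
    by (simp add: algebra_simps)
  finally have "\<bar>B\<bar> * E \<le> \<bar>B\<bar> * ((s a - s c) * \<rho> b + (s b - s c) * \<rho> a + (s a - s b) * \<rho> c)" .
  then show ?thesis
    unfolding E_def using assms(1) by (simp add: mult_le_cancel_left_pos)
qed

lemma convexity_gap_excludes_common_line:
  fixes \<epsilon> C A B d :: real and a b c :: nat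
  assumes "0 < \<epsilon>" "\<epsilon> \<le> 1" "648 / \<epsilon> < C" "16 \<le> a" "a < b" "b < c" "B \<noteq> 0"
    and near: "\<And>n. n \<in> {a, b, c} \<Longrightarrow>
      \<bar>A + B * real n powr (-\<epsilon>) - d / 2 ^ n\<bar> \<le> \<bar>B\<bar> * (18 / C * real n powr (-1-\<epsilon>))"
  shows False
proof -
  define P :: real where "P = 2 ^ (b - a)"
  define \<beta> :: real where "\<beta> = 1 / 2 ^ b - 1 / 2 ^ c"
  define W where "W = real (b + 2) powr (-1-\<epsilon>)"
  have C: "0 < C"
    using assms(1,3) by (smt (verit) divide_pos_pos)
  have P: "2 \<le> P"
    using assms power_increasing[of 1 "b - a" "2::real"] unfolding P_def by simp
  have "0 < \<beta> * W"
    using assms power_strict_increasing[of b c "2::real"] unfolding \<beta>_def W_def by (simp add: field_simps)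
  have "\<epsilon> / 2 * (P - 1) * \<beta> * W
      \<le> (1 / 2 ^ a - 1 / 2 ^ b) * (real b powr (-\<epsilon>) - real c powr (-\<epsilon>))
        - (1 / 2 ^ b - 1 / 2 ^ c) * (real a powr (-\<epsilon>) - real b powr (-\<epsilon>))"
    using convexity_gap_ge[OF assms(1,2,4-6)] unfolding P_def \<beta>_def W_def .
  also have "\<dots> \<le> (1 / 2 ^ a - 1 / 2 ^ c) * (18 / C * real b powr (-1-\<epsilon>))
      + (1 / 2 ^ b - 1 / 2 ^ c) * (18 / C * real a powr (-1-\<epsilon>))
      + (1 / 2 ^ a - 1 / 2 ^ b) * (18 / C * real c powr (-1-\<epsilon>))"
  proof (rule divided_difference_le_if_near_line[of B "\<lambda>n. 1 / 2 ^ n" b a c A "\<lambda>n. real n powr (-\<epsilon>)" d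
        "\<lambda>n. 18 / C * real n powr (-1-\<epsilon>)", OF assms(7)])
    show "1 / 2 ^ b \<le> (1::real) / 2 ^ a" "1 / 2 ^ c \<le> (1::real) / 2 ^ b"
      using assms(5,6) by (auto intro!: divide_left_mono power_increasing)
    show "\<bar>A + B * real n powr (-\<epsilon>) - d * (1 / 2 ^ n)\<bar> \<le> \<bar>B\<bar> * (18 / C * real n powr (-1-\<epsilon>))"
      if "n \<in> {a, b, c}" for n
      using near[OF that] by simp
  qed
  also have "\<dots> = 18 / C * ((1 / 2 ^ a - 1 / 2 ^ c) * real b powr (-1-\<epsilon>)
      + (1 / 2 ^ b - 1 / 2 ^ c) * real a powr (-1-\<epsilon>) + (1 / 2 ^ a - 1 / 2 ^ b) * real c powr (-1-\<epsilon>))"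
    using C by (simp add: field_simps)
  also have "\<dots> \<le> 18 / C * (9 * P * \<beta> * W)"
    using weighted_powr_sum_le[OF assms(1,2,4-6)] C unfolding P_def \<beta>_def W_def
    by (intro mult_left_mono) simp_all
  finally have "(\<beta> * W) * (\<epsilon> / 2 * (P - 1)) \<le> (\<beta> * W) * (162 * P / C)"
    by (simp add: algebra_simps)
  then have "\<epsilon> / 2 * (P - 1) \<le> 162 * P / C"
    using \<open>0 < \<beta> * W\<close> by (rule mult_left_le_imp_le)
  moreover have "\<epsilon> / 4 * P \<le> \<epsilon> / 2 * (P - 1)"
    using assms(1) P mult_left_mono[of 2 P \<epsilon>] by simp
  ultimately have "\<epsilon> / 4 * P \<le> 162 * P / C"
    by (rule order_trans[rotated])
  then have "\<epsilon> * C \<le> 648"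
    using P C by (simp add: field_simps)
  then show False
    using assms(1,3) by (simp add: pos_divide_less_eq mult.commute)
qed

lemma no_line_meets_three_Qsq:
  fixes \<epsilon> C :: real and a b c :: nat
  assumes "0 < \<epsilon>" "\<epsilon> \<le> 1" "648 / \<epsilon> < C" "2 \<le> C" "16 \<le> a" "a < b" "b < c"
    and small: "\<And>n. a \<le> n \<Longrightarrow> 1 / 2 ^ n \<le> real n powr (-1-\<epsilon>) / C"
    and "is_line L" "L \<inter> Qsq \<epsilon> C a \<noteq> {}" "L \<inter> Qsq \<epsilon> C b \<noteq> {}" "L \<inter> Qsq \<epsilon> C c \<noteq> {}"
  shows False
proof -
  obtain A B d where AB: "(A, B) \<noteq> (0, 0)" and L: "L = {(x, y). A * x + B * y = d}"
    using assms(9) unfolding is_line_def by blast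
  have meets: "\<exists>x y. (x, y) \<in> Qsq \<epsilon> C n \<and> A * x + B * y = d" if "n \<in> {a, b, c}" for n
    using that assms(10-12) unfolding L by auto
  have C: "0 < C"
    using assms(4) by simp
  obtain xa ya xb yb where "(xa, ya) \<in> Qsq \<epsilon> C a" "A * xa + B * ya = d"
    and "(xb, yb) \<in> Qsq \<epsilon> C b" "A * xb + B * yb = d"
    using meets[of a] meets[of b] by blast
  then have slope: "\<bar>A\<bar> \<le> 8 * \<bar>B\<bar>"
    using line_through_two_Qsq_slope_bound[of \<epsilon> C a b] assms by simp
  with AB have "B \<noteq> 0"
    by auto
  show False
  proof (rule convexity_gap_excludes_common_line[OF assms(1-3,5-7) \<open>B \<noteq> 0\<close>])
    fix n assume n: "n \<in> {a, b, c}"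
    then obtain x y where "(x, y) \<in> Qsq \<epsilon> C n" "A * x + B * y = d"
      using meets by blast
    then have "\<bar>A + B * real n powr (-\<epsilon>) - d / 2 ^ n\<bar>
        \<le> (\<bar>A\<bar> + \<bar>B\<bar>) * (2 * real n powr (-1-\<epsilon>) / C)"
      using Qsq_line_residual[OF C] small[of n] n assms(5-7) by auto
    also have "\<dots> \<le> (9 * \<bar>B\<bar>) * (2 * real n powr (-1-\<epsilon>) / C)"
      using slope C by (intro mult_right_mono) auto
    finally show "\<bar>A + B * real n powr (-\<epsilon>) - d / 2 ^ n\<bar> \<le> \<bar>B\<bar> * (18 / C * real n powr (-1-\<epsilon>))"
      by (simp add: mult_ac)
  qed
qed

lemma finite_card_le_2_if_no_increasing_triple:
  fixes S :: "'a :: linorder set"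
  assumes "\<And>a b c. a \<in> S \<Longrightarrow> b \<in> S \<Longrightarrow> c \<in> S \<Longrightarrow> a < b \<Longrightarrow> b < c \<Longrightarrow> False"
  shows "finite S \<and> card S \<le> 2"
proof (rule ccontr)
  assume "\<not> (finite S \<and> card S \<le> 2)"
  then obtain T where "T \<subseteq> S" "card T = 3"
    by (metis infinite_arbitrarily_large obtain_subset_with_card_n not_le_imp_less Suc_leI
        numeral_2_eq_2 numeral_3_eq_3)
  then obtain x y z where "x \<in> S" "y \<in> S" "z \<in> S" "x \<noteq> y" "y \<noteq> z" "x \<noteq> z"
    by (auto simp: card_3_iff)
  then show False
    using assms by (metis linorder_neqE)
qed

theorem lemma3p2:
  fixes \<epsilon> :: real
  assumes "0 < \<epsilon>" and "\<epsilon> < 1"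
  shows "\<exists>c0::real. \<forall>c\<ge>c0. \<exists>n0::nat. \<forall>L. is_line L \<longrightarrow>
           finite {n. n \<ge> n0 \<and> L \<inter> Qsq \<epsilon> c n \<noteq> {}} \<and>
           card {n. n \<ge> n0 \<and> L \<inter> Qsq \<epsilon> c n \<noteq> {}} \<le> 2"
proof (intro exI[of _ "648 / \<epsilon> + 2"] allI impI)
  fix c :: real
  assume "648 / \<epsilon> + 2 \<le> c"
  moreover have "0 < 648 / \<epsilon>"
    using assms by simp
  ultimately have c: "648 / \<epsilon> < c" "2 \<le> c" "0 < c"
    by linarith+
  have "\<forall>\<^sub>F n in sequentially. 1 / 2 ^ n \<le> real n powr (-1-\<epsilon>) / c"
    using \<open>0 < c\<close> by real_asymp
  then obtain n0 where small: "\<And>n. n0 \<le> n \<Longrightarrow> 1 / 2 ^ n \<le> real n powr (-1-\<epsilon>) / c"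
    unfolding eventually_sequentially by blast
  show "\<exists>n0::nat. \<forall>L. is_line L \<longrightarrow>
           finite {n. n \<ge> n0 \<and> L \<inter> Qsq \<epsilon> c n \<noteq> {}} \<and>
           card {n. n \<ge> n0 \<and> L \<inter> Qsq \<epsilon> c n \<noteq> {}} \<le> 2"
  proof (intro exI[of _ "max 16 n0"] allI impI finite_card_le_2_if_no_increasing_triple)
    fix L a b c'
    assume "is_line L" and "a \<in> {n. max 16 n0 \<le> n \<and> L \<inter> Qsq \<epsilon> c n \<noteq> {}}"
      "b \<in> {n. max 16 n0 \<le> n \<and> L \<inter> Qsq \<epsilon> c n \<noteq> {}}" "c' \<in> {n. max 16 n0 \<le> n \<and> L \<inter> Qsq \<epsilon> c n \<noteq> {}}"
      and "a < b" "b < c'"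
    then show False
      using no_line_meets_three_Qsq[of \<epsilon> c a b c' L] assms c small by auto
  qed
qed

end
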